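(* Let $\mathcal{H} = \mathbb{C}^{d_1} \otimes \cdots \otimes \mathbb{C}^{d_n}$ and let $|\psi\rangle \in \mathcal{H}$ be a generic unit vector, i.e. $|\psi\rangle$ is not a product state and its best product state approximation is unique up to a global phase. Let $\lambda = \max_{|\pi\rangle} |\langle \pi|\psi\rangle|$ (maximum over product states), and let $|\pi\rangle$ be a best product state approximation chosen (by fixing its phase) so that $\langle \pi|\psi\rangle = \lambda > 0$. Define $$|\eta\rangle = \frac{1}{\sqrt{1-\lambda^2}} \left(\mathbb{1} - |\pi\rangle\langle\pi|\right)|\psi\rangle,$$ and for a step size $\theta > 0$ define the updated state $$|\tilde\psi\rangle = \frac{|\psi\rangle + \theta|\eta\rangle}{\| |\psi\rangle + \theta |\eta\rangle \|}.$$ Then there exists $\Theta > 0$ such that for every $\theta$ with $0 < \theta < \Theta$ one has $G(|\psi\rangle) < G(|\tilde\psi\rangle)$.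
   Context: A product state is a unit vector of the form $|a_1\rangle \otimes \cdots \otimes |a_n\rangle$ with $|a_k\rangle \in \mathbb{C}^{d_k}$. A best product state approximation of a unit vector $|\varphi\rangle$ is a product state $|\pi\rangle$ maximizing $|\langle\pi|\varphi\rangle|^2$ over all product states. The geometric measure of entanglement of a unit vector $|\varphi\rangle$ is $G(|\varphi\rangle) = 1 - \lambda^2(|\varphi\rangle)$, where $\lambda^2(|\varphi\rangle) = \max_{|\pi\rangle \text{ product}} |\langle \pi|\varphi\rangle|^2$. *)

theory Defs
  imports "HOL-Analysis.Analysis"
begin

text \<open>The Hilbert space C^{d_1} (x) ... (x) C^{d_n} is modelled, for a list of local
dimensions d = [d_1,...,d_n], as functions from multi-indices (lists of naturals)
to complex numbers that vanish outside the finite index set idx d.\<close>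

definition idx :: "nat list \<Rightarrow> nat list set" where
  "idx d = {is. length is = length d \<and> (\<forall>k<length d. is ! k < d ! k)}"

definition in_space :: "nat list \<Rightarrow> (nat list \<Rightarrow> complex) \<Rightarrow> bool" where
  "in_space d f \<longleftrightarrow> (\<forall>is. is \<notin> idx d \<longrightarrow> f is = 0)"

definition inner_t :: "nat list \<Rightarrow> (nat list \<Rightarrow> complex) \<Rightarrow> (nat list \<Rightarrow> complex) \<Rightarrow> complex" where
  "inner_t d f g = (\<Sum>is\<in>idx d. cnj (f is) * g is)"

definition norm_t :: "nat list \<Rightarrow> (nat list \<Rightarrow> complex) \<Rightarrow> real" where
  "norm_t d f = sqrt (\<Sum>is\<in>idx d. (cmod (f is))\<^sup>2)"

definition unit_vec :: "nat list \<Rightarrow> (nat list \<Rightarrow> complex) \<Rightarrow> bool" where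
  "unit_vec d f \<longleftrightarrow> in_space d f \<and> norm_t d f = 1"

definition product_state :: "nat list \<Rightarrow> (nat list \<Rightarrow> complex) \<Rightarrow> bool" where
  "product_state d p \<longleftrightarrow>
     (\<exists>a :: nat \<Rightarrow> nat \<Rightarrow> complex.
        (\<forall>k<length d. (\<Sum>j<d ! k. (cmod (a k j))\<^sup>2) = 1) \<and>
        p = (\<lambda>is. if is \<in> idx d then (\<Prod>k<length d. a k (is ! k)) else 0))"

text \<open>lambda^2(phi) = max over product states pi of |<pi|phi>|^2 (the maximum is attained
by compactness, so it equals the supremum).\<close>
definition lambda2 :: "nat list \<Rightarrow> (nat list \<Rightarrow> complex) \<Rightarrow> real" where
  "lambda2 d f = (SUP p\<in>{p. product_state d p}. (cmod (inner_t d p f))\<^sup>2)"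

definition best_approx :: "nat list \<Rightarrow> (nat list \<Rightarrow> complex) \<Rightarrow> (nat list \<Rightarrow> complex) \<Rightarrow> bool" where
  "best_approx d f p \<longleftrightarrow> product_state d p \<and>
     (\<forall>q. product_state d q \<longrightarrow> (cmod (inner_t d q f))\<^sup>2 \<le> (cmod (inner_t d p f))\<^sup>2)"

definition GME :: "nat list \<Rightarrow> (nat list \<Rightarrow> complex) \<Rightarrow> real" where
  "GME d f = 1 - lambda2 d f"

definition generic :: "nat list \<Rightarrow> (nat list \<Rightarrow> complex) \<Rightarrow> bool" where
  "generic d f \<longleftrightarrow> unit_vec d f \<and> \<not> product_state d f \<and>
     (\<forall>p q. best_approx d f p \<longrightarrow> best_approx d f q \<longrightarrow>
        (\<exists>c. cmod c = 1 \<and> q = (\<lambda>is. c * p is)))"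

end

theory Submission
  imports Defs
begin

text \<open>Write \<open>psi = lam pi + mu eta\<close> with \<open>eta\<close> a unit vector orthogonal to \<open>pi\<close> and
  \<open>lam^2 + mu^2 = 1\<close>; the step replaces \<open>mu\<close> by \<open>t = mu + theta\<close>, which gives squared norm
  \<open>lam^2 + t^2\<close>. For a product state \<open>q\<close>, \<open>|<q|lam pi + t eta>|^2 - lam^2 (lam^2 + t^2)\<close> is a
  quadratic polynomial in \<open>t\<close> with bounded coefficients which is \<open>\<le> 0\<close> at \<open>t = mu\<close>. At the
  phase multiples of \<open>pi\<close> its slope there is \<open>-2 mu lam^2\<close>. As the best approximation is unique
  up to a phase, compactness of the set of product states keeps the slope below \<open>-mu lam^2\<close> for
  all nearly optimal \<open>q\<close>, while the other \<open>q\<close> stay a fixed distance below the optimum. So for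
  small \<open>theta\<close> all overlaps with the normalised new state are uniformly below \<open>lam^2\<close>.\<close>

lemma finite_idx: "finite (idx d)"
proof -
  have "idx d \<subseteq> {xs. set xs \<subseteq> {..<sum_list d} \<and> length xs = length d}"
  proof
    fix xs assume "xs \<in> idx d"
    then have l: "length xs = length d" and b: "\<forall>k<length d. xs ! k < d ! k"
      by (auto simp: idx_def)
    have "set xs \<subseteq> {..<sum_list d}"
    proof
      fix y assume "y \<in> set xs"
      then obtain k where "k < length xs" "xs ! k = y" by (auto simp: in_set_conv_nth)
      then show "y \<in> {..<sum_list d}" using b l elem_le_sum_list[of k d] by fastforce
    qed
    with l show "xs \<in> {xs. set xs \<subseteq> {..<sum_list d} \<and> length xs = length d}" by auto
  qed
  then show ?thesis by (rule finite_subset) (rule finite_lists_length_eq, simp)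
qed

lemma idx_Nil [simp]: "idx [] = {[]}"
  by (auto simp: idx_def)

lemma idx_Cons: "idx (x # d) = (\<lambda>(j, is). j # is) ` ({..<x} \<times> idx d)"
proof (rule set_eqI, rule iffI)
  fix xs assume "xs \<in> idx (x # d)"
  then have l: "length xs = Suc (length d)" and b: "\<forall>k<Suc (length d). xs ! k < (x # d) ! k"
    by (auto simp: idx_def)
  then obtain j ys where xs: "xs = j # ys" by (cases xs) auto
  have "j < x" using b xs by (metis nth_Cons_0 zero_less_Suc)
  moreover have "ys \<in> idx d" using l b xs by (auto simp: idx_def)
  ultimately show "xs \<in> (\<lambda>(j, is). j # is) ` ({..<x} \<times> idx d)" using xs by auto
next
  fix xs assume "xs \<in> (\<lambda>(j, is). j # is) ` ({..<x} \<times> idx d)"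
  then obtain j ys where "xs = j # ys" "j < x" "ys \<in> idx d" by auto
  then show "xs \<in> idx (x # d)" by (auto simp: idx_def less_Suc_eq_0_disj)
qed

lemma sum_idx_prod:
  fixes g :: "nat \<Rightarrow> nat \<Rightarrow> 'a::comm_semiring_1"
  shows "(\<Sum>is\<in>idx d. \<Prod>k<length d. g k (is ! k)) = (\<Prod>k<length d. \<Sum>j<d ! k. g k j)"
proof (induction d arbitrary: g)
  case Nil
  then show ?case by simp
next
  case (Cons x d)
  have inj: "inj_on (\<lambda>(j, is). j # is) ({..<x} \<times> idx d)" by (auto simp: inj_on_def)
  have "(\<Sum>is\<in>idx (x # d). \<Prod>k<length (x # d). g k (is ! k))
      = (\<Sum>(j, is)\<in>{..<x} \<times> idx d. g 0 j * (\<Prod>k<length d. g (Suc k) (is ! k)))"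
    unfolding idx_Cons sum.reindex[OF inj]
    by (simp only: o_def length_Cons split_def prod.lessThan_Suc_shift nth_Cons_0 nth_Cons_Suc)
  also have "\<dots> = (\<Sum>j<x. \<Sum>is\<in>idx d. g 0 j * (\<Prod>k<length d. g (Suc k) (is ! k)))"
    by (simp add: sum.cartesian_product)
  also have "\<dots> = (\<Sum>j<x. g 0 j) * (\<Sum>is\<in>idx d. \<Prod>k<length d. g (Suc k) (is ! k))"
    by (simp only: sum_product)
  also have "\<dots> = (\<Prod>k<length (x # d). \<Sum>j<(x # d) ! k. g k j)"
    using Cons.IH[of "\<lambda>k. g (Suc k)"] unfolding length_Cons prod.lessThan_Suc_shift by simp
  finally show ?case .
qed

lemma norm_le_1_of_sum_sq_eq_1:
  fixes a :: "nat \<Rightarrow> complex"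
  assumes "(\<Sum>i<m. (cmod (a i))\<^sup>2) = 1" and "j < m"
  shows "cmod (a j) \<le> 1"
proof -
  have "(cmod (a j))\<^sup>2 \<le> (\<Sum>i<m. (cmod (a i))\<^sup>2)"
    using assms(2) by (intro member_le_sum) auto
  with assms(1) show ?thesis by (simp add: power_le_one_iff)
qed

lemma product_state_outside_idx: "product_state d p \<Longrightarrow> is \<notin> idx d \<Longrightarrow> p is = 0"
  by (auto simp: product_state_def)

lemma product_state_sum_sq:
  assumes "product_state d p"
  shows "(\<Sum>is\<in>idx d. (cmod (p is))\<^sup>2) = 1"
proof -
  obtain a where a: "\<forall>k<length d. (\<Sum>j<d ! k. (cmod (a k j))\<^sup>2) = 1"
    "p = (\<lambda>is. if is \<in> idx d then (\<Prod>k<length d. a k (is ! k)) else 0)"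
    using assms unfolding product_state_def by blast
  have "(\<Sum>is\<in>idx d. (cmod (p is))\<^sup>2) = (\<Sum>is\<in>idx d. \<Prod>k<length d. (cmod (a k (is ! k)))\<^sup>2)"
    by (rule sum.cong) (auto simp: a(2) prod_norm[symmetric] prod_power_distrib)
  also have "\<dots> = (\<Prod>k<length d. \<Sum>j<d ! k. (cmod (a k j))\<^sup>2)"
    by (rule sum_idx_prod)
  finally show ?thesis using a(1) by simp
qed

lemma product_state_basis:
  assumes "is0 \<in> idx d"
  shows "product_state d (\<lambda>is. if is = is0 then 1 else 0)"
proof -
  define a where "a = (\<lambda>k j. if j = is0 ! k then (1::complex) else 0)"
  have "(\<Sum>j<d ! k. (cmod (a k j))\<^sup>2) = 1" if "k < length d" for k
  proof -
    have "is0 ! k < d ! k" using assms that by (auto simp: idx_def)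
    then show ?thesis
      unfolding a_def by (simp add: if_distrib[of "\<lambda>x. (cmod x)\<^sup>2"] cong: if_cong)
  qed
  moreover have "(\<Prod>k<length d. a k (js ! k)) = (if js = is0 then 1 else 0)" if "js \<in> idx d" for js
  proof -
    have "length js = length is0" "length js = length d" using assms that by (auto simp: idx_def)
    then have "js = is0 \<longleftrightarrow> (\<forall>k<length d. js ! k = is0 ! k)"
      using nth_equalityI by metis
    then show ?thesis by (auto simp: a_def intro: prod_zero)
  qed
  ultimately show ?thesis
    unfolding product_state_def using assms
    by (intro exI[of _ a]) (auto simp: fun_eq_iff)
qed

lemma bounded_family_convergent_subseq:
  fixes f :: "nat \<Rightarrow> 'i \<Rightarrow> complex"
  assumes "finite S" and "\<And>m i. i \<in> S \<Longrightarrow> cmod (f m i) \<le> B"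
  shows "\<exists>r. strict_mono r \<and> (\<forall>i\<in>S. \<exists>l. (\<lambda>m. f (r m) i) \<longlonglongrightarrow> l)"
  using assms
proof (induction S rule: finite_induct)
  case empty
  then show ?case by (auto intro: strict_mono_id[unfolded id_def])
next
  case (insert x S)
  then obtain r where r: "strict_mono r" "\<forall>i\<in>S. \<exists>l. (\<lambda>m. f (r m) i) \<longlonglongrightarrow> l" by auto
  have "bounded (range (\<lambda>m. f (r m) x))"
    using insert.prems unfolding bounded_iff by auto
  then obtain l r' where r': "strict_mono r'" "((\<lambda>m. f (r m) x) \<circ> r') \<longlonglongrightarrow> l"
    using bounded_imp_convergent_subsequence by blast
  have "\<exists>l. (\<lambda>m. f (r (r' m)) i) \<longlonglongrightarrow> l" if "i \<in> insert x S" for i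
  proof (cases "i = x")
    case True
    with r' show ?thesis by (auto simp: o_def)
  next
    case False
    with that r obtain l where "(\<lambda>m. f (r m) i) \<longlonglongrightarrow> l" by auto
    from LIMSEQ_subseq_LIMSEQ[OF this r'(1)] show ?thesis by (auto simp: o_def)
  qed
  moreover have "strict_mono (r \<circ> r')" using r r' by (simp add: strict_mono_o)
  ultimately show ?case by (intro exI[of _ "r \<circ> r'"]) (simp add: o_def)
qed

lemma product_state_seq_compact:
  fixes q :: "nat \<Rightarrow> nat list \<Rightarrow> complex"
  assumes "\<And>m. product_state d (q m)"
  shows "\<exists>r p. strict_mono r \<and> product_state d p \<and> (\<forall>is. (\<lambda>m. q (r m) is) \<longlonglongrightarrow> p is)"
proof -
  have "\<forall>m. \<exists>a. (\<forall>k<length d. (\<Sum>j<d ! k. (cmod (a k j))\<^sup>2) = 1) \<and>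
        q m = (\<lambda>is. if is \<in> idx d then (\<Prod>k<length d. a k (is ! k)) else 0)"
    using assms unfolding product_state_def by blast
  then obtain a where a: "\<And>m. \<forall>k<length d. (\<Sum>j<d ! k. (cmod (a m k j))\<^sup>2) = 1"
    "\<And>m. q m = (\<lambda>is. if is \<in> idx d then (\<Prod>k<length d. a m k (is ! k)) else 0)"
    by metis
  define S where "S = {(k, j). k < length d \<and> j < d ! k}"
  have "S \<subseteq> {..<length d} \<times> {..<sum_list d}"
    using elem_le_sum_list by (fastforce simp: S_def)
  then have "finite S" by (rule finite_subset) simp
  moreover have "cmod (a m (fst i) (snd i)) \<le> 1" if "i \<in> S" for m i
    using that a(1)[of m] norm_le_1_of_sum_sq_eq_1[where a="a m (fst i)"] by (auto simp: S_def)
  ultimately obtain r where r: "strict_mono r" "\<forall>i\<in>S. \<exists>l. (\<lambda>m. a (r m) (fst i) (snd i)) \<longlonglongrightarrow> l"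
    using bounded_family_convergent_subseq[of S "\<lambda>m i. a m (fst i) (snd i)" 1] by auto
  define b where "b = (\<lambda>k j. lim (\<lambda>m. a (r m) k j))"
  have conv: "(\<lambda>m. a (r m) k j) \<longlonglongrightarrow> b k j" if kj: "k < length d" "j < d ! k" for k j
  proof -
    obtain l where "(\<lambda>m. a (r m) k j) \<longlonglongrightarrow> l" using r(2) kj by (force simp: S_def)
    then show ?thesis unfolding b_def by (simp add: limI)
  qed
  have b_sum_sq: "(\<Sum>j<d ! k. (cmod (b k j))\<^sup>2) = 1" if k: "k < length d" for k
  proof -
    have "(\<lambda>m. \<Sum>j<d ! k. (cmod (a (r m) k j))\<^sup>2) \<longlonglongrightarrow> (\<Sum>j<d ! k. (cmod (b k j))\<^sup>2)"
      by (intro tendsto_intros conv k) simp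
    moreover have "(\<lambda>m. \<Sum>j<d ! k. (cmod (a (r m) k j))\<^sup>2) = (\<lambda>m. 1)" using a(1) k by simp
    ultimately show ?thesis using LIMSEQ_unique tendsto_const by metis
  qed
  define p where "p = (\<lambda>is. if is \<in> idx d then \<Prod>k<length d. b k (is ! k) else 0)"
  have "product_state d p"
    unfolding product_state_def p_def using b_sum_sq by blast
  moreover have "(\<lambda>m. q (r m) js) \<longlonglongrightarrow> p js" for js
  proof (cases "js \<in> idx d")
    case True
    then have "(\<lambda>m. \<Prod>k<length d. a (r m) k (js ! k)) \<longlonglongrightarrow> (\<Prod>k<length d. b k (js ! k))"
      by (intro tendsto_prod conv) (auto simp: idx_def)
    with True show ?thesis by (simp add: a(2) p_def)
  qed (simp add: a(2) p_def)
  ultimately show ?thesis using r(1) by blast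
qed

lemma inner_t_self: "inner_t d f f = complex_of_real (\<Sum>is\<in>idx d. (cmod (f is))\<^sup>2)"
  unfolding inner_t_def of_real_sum
  by (rule sum.cong) (simp_all add: complex_norm_square[symmetric] mult.commute)

lemma product_state_inner_self: "product_state d p \<Longrightarrow> inner_t d p p = 1"
  by (simp add: inner_t_self product_state_sum_sq)

lemma inner_t_lin_right:
  "inner_t d f (\<lambda>is. a * g is + b * h is) = a * inner_t d f g + b * inner_t d f h"
  unfolding inner_t_def by (simp add: sum.distrib sum_distrib_left algebra_simps)

lemma inner_t_scale_left: "inner_t d (\<lambda>is. c * f is) g = cnj c * inner_t d f g"
  unfolding inner_t_def by (simp add: sum_distrib_left algebra_simps)

lemma inner_t_divide_right: "inner_t d f (\<lambda>is. g is / c) = inner_t d f g / c"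
  unfolding inner_t_def by (simp add: sum_divide_distrib)

lemma inner_t_tendsto_left:
  assumes "\<And>is. (\<lambda>m. q m is) \<longlonglongrightarrow> p is"
  shows "(\<lambda>m. inner_t d (q m) f) \<longlonglongrightarrow> inner_t d p f"
  unfolding inner_t_def by (intro tendsto_intros assms)

lemma inner_t_norm_le_1:
  assumes "(\<Sum>is\<in>idx d. (cmod (f is))\<^sup>2) = 1" and "(\<Sum>is\<in>idx d. (cmod (g is))\<^sup>2) = 1"
  shows "cmod (inner_t d f g) \<le> 1"
proof -
  have "cmod (inner_t d f g) \<le> (\<Sum>is\<in>idx d. cmod (cnj (f is) * g is))"
    unfolding inner_t_def by (rule norm_sum)
  also have "\<dots> \<le> (\<Sum>is\<in>idx d. ((cmod (f is))\<^sup>2 + (cmod (g is))\<^sup>2) / 2)"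
  proof (rule sum_mono)
    fix js
    show "cmod (cnj (f js) * g js) \<le> ((cmod (f js))\<^sup>2 + (cmod (g js))\<^sup>2) / 2"
      using sum_squares_bound[of "cmod (f js)" "cmod (g js)"] by (simp add: norm_mult)
  qed
  also have "\<dots> = 1"
    using assms by (simp add: sum_divide_distrib[symmetric] sum.distrib)
  finally show ?thesis .
qed

lemma product_state_overlap_le_1:
  assumes "product_state d q" and "(\<Sum>is\<in>idx d. (cmod (f is))\<^sup>2) = 1"
  shows "cmod (inner_t d q f) \<le> 1"
  using inner_t_norm_le_1[OF product_state_sum_sq[OF assms(1)] assms(2)] .

lemma cmod_sq_real_lin_comb:
  fixes x y :: real and u v :: complex
  shows "(cmod (complex_of_real x * u + complex_of_real y * v))\<^sup>2
     = x\<^sup>2 * (cmod u)\<^sup>2 + 2 * x * y * Re (cnj u * v) + y\<^sup>2 * (cmod v)\<^sup>2"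
  unfolding cmod_power2 by (simp add: power2_eq_square algebra_simps)

lemma sum_sq_real_lin_comb:
  fixes x y :: real
  shows "(\<Sum>is\<in>idx d. (cmod (complex_of_real x * f is + complex_of_real y * g is))\<^sup>2)
     = x\<^sup>2 * (\<Sum>is\<in>idx d. (cmod (f is))\<^sup>2) + 2 * x * y * Re (inner_t d f g)
       + y\<^sup>2 * (\<Sum>is\<in>idx d. (cmod (g is))\<^sup>2)"
  unfolding inner_t_def
  by (simp add: cmod_sq_real_lin_comb sum.distrib sum_distrib_left[symmetric] Re_sum
      del: complex_cnj_mult)

lemma lambda2_best_approx:
  assumes "best_approx d f p"
  shows "lambda2 d f = (cmod (inner_t d p f))\<^sup>2"
  unfolding lambda2_def
  by (rule cSup_eq_maximum) (use assms in \<open>auto simp: best_approx_def\<close>)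

lemma lambda2_le:
  assumes "product_state d p"
    and "\<And>q. product_state d q \<Longrightarrow> (cmod (inner_t d q f))\<^sup>2 \<le> c"
  shows "lambda2 d f \<le> c"
  unfolding lambda2_def by (rule cSUP_least) (use assms in auto)

lemma unit_vec_overlaps_product_state:
  assumes "unit_vec d f"
  shows "\<exists>p. product_state d p \<and> inner_t d p f \<noteq> 0"
proof -
  have "(\<Sum>is\<in>idx d. (cmod (f is))\<^sup>2) = 1"
    using assms by (simp add: unit_vec_def norm_t_def)
  then obtain is0 where is0: "is0 \<in> idx d" "f is0 \<noteq> 0"
    by (metis (no_types, lifting) norm_zero power_zero_numeral sum.neutral zero_neq_one)
  have "inner_t d (\<lambda>is. if is = is0 then 1 else 0) f = (\<Sum>is\<in>idx d. if is = is0 then f is else 0)"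
    unfolding inner_t_def by (rule sum.cong) auto
  also have "\<dots> = f is0"
    using is0(1) finite_idx by (simp add: sum.delta)
  finally have "inner_t d (\<lambda>is. if is = is0 then 1 else 0) f = f is0" .
  with is0 product_state_basis show ?thesis by metis
qed

lemma unit_vec_eq_product_state:
  assumes "unit_vec d f" and "product_state d p" and "inner_t d p f = 1"
  shows "f = p"
proof -
  have "(\<Sum>is\<in>idx d. (cmod (complex_of_real (-1) * p is + complex_of_real 1 * f is))\<^sup>2) = 0"
    unfolding sum_sq_real_lin_comb using assms product_state_sum_sq[OF assms(2)]
    by (simp add: unit_vec_def norm_t_def)
  then have "\<forall>is\<in>idx d. f is = p is"
    by (subst (asm) sum_nonneg_eq_0_iff[OF finite_idx]) auto
  moreover have "\<forall>is. is \<notin> idx d \<longrightarrow> f is = p is"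
    using assms(1,2) product_state_outside_idx by (auto simp: unit_vec_def in_space_def)
  ultimately show ?thesis by auto
qed

lemma uniform_quadratic_gap:
  fixes a b c :: "'q \<Rightarrow> real"
  assumes "M > 0" and "\<rho> > 0" and "\<delta> > 0"
    and "\<And>q. q \<in> Q \<Longrightarrow> a q \<le> 0"
    and "\<And>q. q \<in> Q \<Longrightarrow> b q \<le> M" and "\<And>q. q \<in> Q \<Longrightarrow> c q \<le> M"
    and "\<And>q. q \<in> Q \<Longrightarrow> a q > - \<rho> \<Longrightarrow> b q \<le> - \<delta>"
  shows "\<exists>\<Theta>>0. \<forall>s. 0 < s \<and> s < \<Theta> \<longrightarrow> (\<exists>e>0. \<forall>q\<in>Q. a q + b q * s + c q * s\<^sup>2 \<le> - e)"
proof -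
  define \<Theta> where "\<Theta> = min 1 (min (\<rho> / (4 * M)) (\<delta> / (2 * M)))"
  have gap: "a q + b q * s + c q * s\<^sup>2 \<le> - min (\<rho> / 2) (\<delta> * s / 2)"
    if s: "0 < s" "s < \<Theta>" and q: "q \<in> Q" for s q
  proof -
    have Ms: "s \<le> 1" "M * s \<le> \<rho> / 4" "M * s \<le> \<delta> / 2"
      using s assms(1) by (auto simp: \<Theta>_def field_simps)
    have c_bound: "c q * s\<^sup>2 \<le> (M * s) * s"
      using mult_right_mono[OF assms(6)[OF q], of "s * s"] by (simp add: power2_eq_square mult.assoc)
    have Mss: "M * s * s \<le> M * s" "M * s * s \<le> \<delta> / 2 * s"
      using Ms s(1) assms(1) by (simp_all add: mult_right_mono)
    have b_bound: "b q * s \<le> M * s"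
      using assms(5)[OF q] s(1) by (simp add: mult_right_mono)
    show ?thesis
    proof (cases "a q > - \<rho>")
      case True
      then have "b q * s \<le> - \<delta> * s"
        using mult_right_mono[OF assms(7)[OF q True], of s] s(1) by simp
      with c_bound Mss assms(4)[OF q] show ?thesis by linarith
    next
      case False
      with c_bound Mss b_bound Ms show ?thesis by linarith
    qed
  qed
  have "\<Theta> > 0"
    using assms(1-3) by (simp add: \<Theta>_def)
  moreover have "min (\<rho> / 2) (\<delta> * s / 2) > 0" if "s > 0" for s
    using assms(2,3) that by simp
  ultimately show ?thesis
    using gap by blast
qed

lemma cmod_sq_real_lin_comb_expand:
  fixes l t m :: real and u v :: complex
  shows "(cmod (complex_of_real l * u + complex_of_real t * v))\<^sup>2 - l\<^sup>2 * (l\<^sup>2 + t\<^sup>2)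
    = ((cmod (complex_of_real l * u + complex_of_real m * v))\<^sup>2 - l\<^sup>2 * (l\<^sup>2 + m\<^sup>2))
      + (2 * l * Re (cnj u * v) + 2 * m * ((cmod v)\<^sup>2 - l\<^sup>2)) * (t - m)
      + ((cmod v)\<^sup>2 - l\<^sup>2) * (t - m)\<^sup>2"
  unfolding cmod_power2 by (simp add: power2_eq_square algebra_simps)

locale generic_best_approx =
  fixes d :: "nat list" and psi pi :: "nat list \<Rightarrow> complex"
  assumes generic: "generic d psi"
    and best: "best_approx d psi pi"
    and phase: "inner_t d pi psi = complex_of_real (sqrt (lambda2 d psi))"
begin

definition lam :: real where
  "lam = sqrt (lambda2 d psi)"

definition mu :: real where
  "mu = sqrt (1 - lam\<^sup>2)"

definition eta :: "nat list \<Rightarrow> complex" where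
  "eta = (\<lambda>is. complex_of_real (1 / mu) * (psi is - inner_t d pi psi * pi is))"

definition step :: "real \<Rightarrow> nat list \<Rightarrow> complex" where
  "step \<theta> = (\<lambda>is. psi is + complex_of_real \<theta> * eta is)"

text \<open>The derivative in \<open>t\<close>, at \<open>t = mu\<close>, of
  \<open>|<q|lam pi + t eta>|^2 - lam^2 (lam^2 + t^2)\<close>.\<close>
definition slope :: "(nat list \<Rightarrow> complex) \<Rightarrow> real" where
  "slope q = 2 * lam * Re (cnj (inner_t d q pi) * inner_t d q eta)
             + 2 * mu * ((cmod (inner_t d q eta))\<^sup>2 - lam\<^sup>2)"

lemma product_state_pi: "product_state d pi"
  using best by (simp add: best_approx_def)

lemma psi_unit: "unit_vec d psi"
  using generic by (simp add: generic_def)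

lemma psi_sum_sq: "(\<Sum>is\<in>idx d. (cmod (psi is))\<^sup>2) = 1"
  using psi_unit by (simp add: unit_vec_def norm_t_def)

lemma lam_sq: "lam\<^sup>2 = lambda2 d psi"
  using lambda2_best_approx[OF best] by (simp add: lam_def)

lemma inner_pi_psi: "inner_t d pi psi = complex_of_real lam"
  using phase by (simp add: lam_def)

lemma overlap_le_lam_sq: "product_state d q \<Longrightarrow> (cmod (inner_t d q psi))\<^sup>2 \<le> lam\<^sup>2"
  using best lambda2_best_approx[OF best] by (simp add: lam_sq best_approx_def)

lemma lam_pos: "lam > 0"
proof -
  obtain p where "product_state d p" "inner_t d p psi \<noteq> 0"
    using unit_vec_overlaps_product_state[OF psi_unit] by blast
  then have "0 < lam\<^sup>2"
    using overlap_le_lam_sq by (metis zero_less_norm_iff zero_less_power order_less_le_trans)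
  moreover have "lam \<ge> 0" by (simp add: lam_def lambda2_best_approx[OF best])
  ultimately show ?thesis by (metis less_le power_zero_numeral)
qed

lemma lam_lt_1: "lam < 1"
proof -
  have "lam \<le> 1"
    using inner_t_norm_le_1[OF product_state_sum_sq[OF product_state_pi] psi_sum_sq] lam_pos
    by (simp add: inner_pi_psi)
  moreover have "lam \<noteq> 1"
  proof
    assume "lam = 1"
    then have "psi = pi"
      by (intro unit_vec_eq_product_state[OF psi_unit product_state_pi]) (simp add: inner_pi_psi)
    then show False using generic product_state_pi by (simp add: generic_def)
  qed
  ultimately show ?thesis by simp
qed

lemma lam_sq_lt_1: "lam\<^sup>2 < 1"
  using lam_pos lam_lt_1 power_strict_mono[of lam 1 2] by simp

lemma lam_mu_sq: "lam\<^sup>2 + mu\<^sup>2 = 1"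
  using lam_sq_lt_1 by (simp add: mu_def)

lemma mu_pos: "mu > 0"
  using lam_sq_lt_1 by (simp add: mu_def)

lemma mu_le_1: "mu \<le> 1"
  by (simp add: mu_def)

lemma psi_decomp: "psi = (\<lambda>is. complex_of_real lam * pi is + complex_of_real mu * eta is)"
  using mu_pos by (auto simp: eta_def inner_pi_psi field_simps)

lemma inner_pi_eta: "inner_t d pi eta = 0"
proof -
  have "eta = (\<lambda>is. complex_of_real (1 / mu) * psi is + complex_of_real (- lam / mu) * pi is)"
    by (auto simp: eta_def inner_pi_psi diff_divide_distrib)
  then have "inner_t d pi eta = complex_of_real (1 / mu) * inner_t d pi psi
                                + complex_of_real (- lam / mu) * inner_t d pi pi"
    by (simp only: inner_t_lin_right)
  then show ?thesis
    using product_state_inner_self[OF product_state_pi] mu_pos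
    by (simp add: inner_pi_psi field_simps)
qed

lemma eta_sum_sq: "(\<Sum>is\<in>idx d. (cmod (eta is))\<^sup>2) = 1"
proof -
  have "1 = lam\<^sup>2 + mu\<^sup>2 * (\<Sum>is\<in>idx d. (cmod (eta is))\<^sup>2)"
    using psi_sum_sq inner_pi_eta product_state_sum_sq[OF product_state_pi]
    by (subst (asm) psi_decomp) (simp add: sum_sq_real_lin_comb)
  then have "mu\<^sup>2 * (\<Sum>is\<in>idx d. (cmod (eta is))\<^sup>2) = mu\<^sup>2"
    using lam_mu_sq by linarith
  with mu_pos show ?thesis by simp
qed

lemma inner_psi:
  "inner_t d q psi = complex_of_real lam * inner_t d q pi + complex_of_real mu * inner_t d q eta"
  by (subst psi_decomp) (rule inner_t_lin_right)

lemma slope_phase_pi: "cmod c = 1 \<Longrightarrow> slope (\<lambda>is. c * pi is) = - 2 * mu * lam\<^sup>2"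
  by (simp add: slope_def inner_t_scale_left inner_pi_eta)

lemma eta_overlap_sq_le_1: "product_state d q \<Longrightarrow> (cmod (inner_t d q eta))\<^sup>2 \<le> 1"
  using product_state_overlap_le_1[OF _ eta_sum_sq] by (simp add: power_le_one)

lemma slope_le_4:
  assumes q: "product_state d q"
  shows "slope q \<le> 4"
proof -
  have "Re (cnj (inner_t d q pi) * inner_t d q eta) \<le> 1"
    using abs_Re_le_cmod[of "cnj (inner_t d q pi) * inner_t d q eta"]
      mult_le_one[OF product_state_overlap_le_1[OF q product_state_sum_sq[OF product_state_pi]] _
                    product_state_overlap_le_1[OF q eta_sum_sq]]
    by (simp add: norm_mult)
  then have "2 * lam * Re (cnj (inner_t d q pi) * inner_t d q eta) \<le> 2 * lam * 1"
    using lam_pos by (intro mult_left_mono) auto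
  moreover have "2 * mu * ((cmod (inner_t d q eta))\<^sup>2 - lam\<^sup>2) \<le> 2 * mu * 1"
    using eta_overlap_sq_le_1[OF q] zero_le_power2[of lam] mu_pos
    by (intro mult_left_mono) linarith+
  moreover note lam_lt_1 mu_le_1
  ultimately show ?thesis unfolding slope_def by linarith
qed

lemma near_best_subseq_tendsto_phase:
  assumes "\<And>n. product_state d (qs n)"
    and "(\<lambda>n. (cmod (inner_t d (qs n) psi))\<^sup>2) \<longlonglongrightarrow> lam\<^sup>2"
  shows "\<exists>r c. strict_mono r \<and> cmod c = 1 \<and> (\<forall>is. (\<lambda>n. qs (r n) is) \<longlonglongrightarrow> c * pi is)"
proof -
  obtain r p where r: "strict_mono r" "product_state d p" "\<forall>is. (\<lambda>n. qs (r n) is) \<longlonglongrightarrow> p is"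
    using product_state_seq_compact[where q = qs, OF assms(1)] by blast
  have "(\<lambda>n. (cmod (inner_t d (qs (r n)) psi))\<^sup>2) \<longlonglongrightarrow> (cmod (inner_t d p psi))\<^sup>2"
    using r(3) by (intro tendsto_intros inner_t_tendsto_left) auto
  moreover have "(\<lambda>n. (cmod (inner_t d (qs (r n)) psi))\<^sup>2) \<longlonglongrightarrow> lam\<^sup>2"
    using LIMSEQ_subseq_LIMSEQ[OF assms(2) r(1)] by (simp add: o_def)
  ultimately have "(cmod (inner_t d p psi))\<^sup>2 = lam\<^sup>2"
    by (rule LIMSEQ_unique)
  then have "best_approx d psi p"
    using r(2) overlap_le_lam_sq by (simp add: best_approx_def)
  then obtain c where "cmod c = 1" "p = (\<lambda>is. c * pi is)"
    using generic best by (auto simp: generic_def)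
  with r show ?thesis by auto
qed

text \<open>Near-optimal product states are close to a phase multiple of \<open>pi\<close>, where the slope is
  \<open>-2 mu lam^2\<close>; by compactness the slope stays below half of that.\<close>
lemma near_best_slope_neg:
  "\<exists>\<rho>>0. \<forall>q. product_state d q \<longrightarrow> (cmod (inner_t d q psi))\<^sup>2 - lam\<^sup>2 > - \<rho>
                \<longrightarrow> slope q \<le> - (mu * lam\<^sup>2)"
proof (rule ccontr)
  assume "\<not> ?thesis"
  then have bad: "\<forall>\<rho>>0. \<exists>q. product_state d q \<and> (cmod (inner_t d q psi))\<^sup>2 - lam\<^sup>2 > - \<rho>
                          \<and> slope q > - (mu * lam\<^sup>2)"
    by (auto simp: not_le)
  have "\<forall>n. \<exists>q. product_state d q \<and> (cmod (inner_t d q psi))\<^sup>2 - lam\<^sup>2 > - inverse (Suc n)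
                   \<and> slope q > - (mu * lam\<^sup>2)"
  proof
    fix n
    have "inverse (real (Suc n)) > 0" by simp
    with bad show "\<exists>q. product_state d q \<and> (cmod (inner_t d q psi))\<^sup>2 - lam\<^sup>2 > - inverse (Suc n)
                   \<and> slope q > - (mu * lam\<^sup>2)" by blast
  qed
  then obtain qs where qs: "\<And>n. product_state d (qs n)"
    "\<And>n. (cmod (inner_t d (qs n) psi))\<^sup>2 - lam\<^sup>2 > - inverse (Suc n)"
    "\<And>n. slope (qs n) > - (mu * lam\<^sup>2)"
    by metis
  have lower: "(\<lambda>n. lam\<^sup>2 - inverse (real (Suc n))) \<longlonglongrightarrow> lam\<^sup>2"
    using tendsto_diff[OF tendsto_const LIMSEQ_inverse_real_of_nat, of "lam\<^sup>2"] by simp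
  have "lam\<^sup>2 - inverse (real (Suc n)) \<le> (cmod (inner_t d (qs n) psi))\<^sup>2" for n
    using qs(2)[of n] by linarith
  then have near_opt: "(\<lambda>n. (cmod (inner_t d (qs n) psi))\<^sup>2) \<longlonglongrightarrow> lam\<^sup>2"
    using overlap_le_lam_sq[OF qs(1)]
    by (intro tendsto_sandwich[OF always_eventually always_eventually lower tendsto_const]) auto
  then obtain r c where rc: "cmod c = 1" "\<forall>is. (\<lambda>n. qs (r n) is) \<longlonglongrightarrow> c * pi is"
    using near_best_subseq_tendsto_phase[OF qs(1) near_opt] by blast
  have conv: "(\<lambda>n. inner_t d (qs (r n)) f) \<longlonglongrightarrow> inner_t d (\<lambda>is. c * pi is) f" for f
    using rc(2) by (intro inner_t_tendsto_left) auto
  have "(\<lambda>n. slope (qs (r n))) \<longlonglongrightarrow> slope (\<lambda>is. c * pi is)"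
    unfolding slope_def by (intro tendsto_intros conv)
  then have "- (mu * lam\<^sup>2) \<le> slope (\<lambda>is. c * pi is)"
    using qs(3) by (intro LIMSEQ_le_const) (auto intro: less_imp_le)
  with slope_phase_pi[OF rc(1)] mu_pos lam_pos show False
    by (simp add: mult_pos_pos)
qed

lemma step_decomp: "step \<theta> = (\<lambda>is. complex_of_real lam * pi is + complex_of_real (mu + \<theta>) * eta is)"
  unfolding step_def by (subst psi_decomp) (simp add: algebra_simps)

lemma norm_step: "norm_t d (step \<theta>) = sqrt (lam\<^sup>2 + (mu + \<theta>)\<^sup>2)"
  unfolding step_decomp norm_t_def sum_sq_real_lin_comb
  using product_state_sum_sq[OF product_state_pi] eta_sum_sq inner_pi_eta by simp

lemma overlap_step_expand:
  "(cmod (inner_t d q (step \<theta>)))\<^sup>2 - lam\<^sup>2 * (lam\<^sup>2 + (mu + \<theta>)\<^sup>2)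
   = ((cmod (inner_t d q psi))\<^sup>2 - lam\<^sup>2) + slope q * \<theta> + ((cmod (inner_t d q eta))\<^sup>2 - lam\<^sup>2) * \<theta>\<^sup>2"
proof -
  have "inner_t d q (step \<theta>)
        = complex_of_real lam * inner_t d q pi + complex_of_real (mu + \<theta>) * inner_t d q eta"
    unfolding step_decomp by (rule inner_t_lin_right)
  then show ?thesis
    using cmod_sq_real_lin_comb_expand[of lam "inner_t d q pi" "mu + \<theta>" "inner_t d q eta" mu]
    by (simp add: inner_psi[symmetric] lam_mu_sq slope_def)
qed

lemma overlap_normalized_step:
  "(cmod (inner_t d q (\<lambda>is. step \<theta> is / norm_t d (step \<theta>))))\<^sup>2
   = (cmod (inner_t d q (step \<theta>)))\<^sup>2 / (lam\<^sup>2 + (mu + \<theta>)\<^sup>2)"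
  by (simp add: inner_t_divide_right norm_step norm_divide power_divide)

lemma lambda2_step_lt:
  "\<exists>\<Theta>>0. \<forall>\<theta>. 0 < \<theta> \<and> \<theta> < \<Theta> \<longrightarrow>
     lambda2 d (\<lambda>is. step \<theta> is / norm_t d (step \<theta>)) < lambda2 d psi"
proof -
  obtain \<rho> where "\<rho> > 0" and near: "\<And>q. product_state d q \<Longrightarrow>
      (cmod (inner_t d q psi))\<^sup>2 - lam\<^sup>2 > - \<rho> \<Longrightarrow> slope q \<le> - (mu * lam\<^sup>2)"
    using near_best_slope_neg by blast
  have "\<exists>\<Theta>>0. \<forall>s. 0 < s \<and> s < \<Theta> \<longrightarrow> (\<exists>e>0. \<forall>q\<in>Collect (product_state d).
      ((cmod (inner_t d q psi))\<^sup>2 - lam\<^sup>2) + slope q * s + ((cmod (inner_t d q eta))\<^sup>2 - lam\<^sup>2) * s\<^sup>2 \<le> - e)"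
  proof (rule uniform_quadratic_gap[where M = 4 and \<rho> = \<rho> and \<delta> = "mu * lam\<^sup>2"])
    show "0 < mu * lam\<^sup>2" using mu_pos lam_pos by simp
    show "(cmod (inner_t d q eta))\<^sup>2 - lam\<^sup>2 \<le> 4" if "q \<in> Collect (product_state d)" for q
    proof -
      have "(cmod (inner_t d q eta))\<^sup>2 \<le> 1" using eta_overlap_sq_le_1 that by simp
      with zero_le_power2[of lam] show ?thesis by linarith
    qed
  qed (use \<open>\<rho> > 0\<close> near overlap_le_lam_sq slope_le_4 in auto)
  then obtain \<Theta> where "\<Theta> > 0" and \<Theta>: "\<forall>s. 0 < s \<and> s < \<Theta> \<longrightarrow> (\<exists>e>0. \<forall>q\<in>Collect (product_state d).
      ((cmod (inner_t d q psi))\<^sup>2 - lam\<^sup>2) + slope q * s + ((cmod (inner_t d q eta))\<^sup>2 - lam\<^sup>2) * s\<^sup>2 \<le> - e)"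
    by blast
  have "lambda2 d (\<lambda>is. step \<theta> is / norm_t d (step \<theta>)) < lambda2 d psi"
    if \<theta>: "0 < \<theta>" "\<theta> < \<Theta>" for \<theta>
  proof -
    obtain e where "e > 0" and e: "\<And>q. product_state d q \<Longrightarrow>
        ((cmod (inner_t d q psi))\<^sup>2 - lam\<^sup>2) + slope q * \<theta>
        + ((cmod (inner_t d q eta))\<^sup>2 - lam\<^sup>2) * \<theta>\<^sup>2 \<le> - e"
      using \<Theta> \<theta> by auto
    define N where "N = lam\<^sup>2 + (mu + \<theta>)\<^sup>2"
    have "N > 0" using lam_pos by (simp add: N_def add_pos_nonneg)
    have "(cmod (inner_t d q (\<lambda>is. step \<theta> is / norm_t d (step \<theta>))))\<^sup>2 \<le> lam\<^sup>2 - e / N"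
      if "product_state d q" for q
    proof -
      have "(cmod (inner_t d q (\<lambda>is. step \<theta> is / norm_t d (step \<theta>))))\<^sup>2
            = (cmod (inner_t d q (step \<theta>)))\<^sup>2 / N"
        by (simp add: overlap_normalized_step N_def)
      also have "\<dots> \<le> (lam\<^sup>2 * N - e) / N"
      proof (rule divide_right_mono)
        show "(cmod (inner_t d q (step \<theta>)))\<^sup>2 \<le> lam\<^sup>2 * N - e"
          using e[OF that] overlap_step_expand[of q \<theta>] unfolding N_def by linarith
      qed (use \<open>N > 0\<close> in simp)
      also have "\<dots> = lam\<^sup>2 - e / N"
        using \<open>N > 0\<close> by (simp add: field_simps)
      finally show ?thesis .
    qed
    then have "lambda2 d (\<lambda>is. step \<theta> is / norm_t d (step \<theta>)) \<le> lam\<^sup>2 - e / N"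
      by (rule lambda2_le[OF product_state_pi])
    also have "\<dots> < lambda2 d psi"
      using \<open>e > 0\<close> \<open>N > 0\<close> by (simp add: lam_sq)
    finally show ?thesis .
  qed
  with \<open>\<Theta> > 0\<close> show ?thesis by blast
qed

end

theorem mainTheorem4:
  fixes d :: "nat list" and psi pi :: "nat list \<Rightarrow> complex"
  assumes "length d \<ge> 1"
    and "generic d psi"
    and "best_approx d psi pi"
    and "inner_t d pi psi = complex_of_real (sqrt (lambda2 d psi))"
  shows "let lam = sqrt (lambda2 d psi);
             eta = (\<lambda>is. complex_of_real (1 / sqrt (1 - lam\<^sup>2)) *
                          (psi is - inner_t d pi psi * pi is));
             psit = (\<lambda>\<theta>::real. (\<lambda>is. (psi is + complex_of_real \<theta> * eta is) /
                          complex_of_real (norm_t d (\<lambda>js. psi js + complex_of_real \<theta> * eta js))))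
         in \<exists>\<Theta>>0. \<forall>\<theta>. 0 < \<theta> \<and> \<theta> < \<Theta> \<longrightarrow> GME d psi < GME d (psit \<theta>)"
proof -
  interpret generic_best_approx d psi pi
    using assms(2-4) by unfold_locales
  from lambda2_step_lt show ?thesis
    unfolding Let_def GME_def step_def eta_def mu_def lam_def by auto
qed

end
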